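(* Let $A\in\{0,1\}^{n\times n}$ and let $(n_1,n_2)$ be positive integers with $n_1n_2=n$. For each $(i,j)$ with $a_{ij}=1$, write $i-1=\tilde i_1 n_2+\tilde i_2$ and $j-1=\tilde j_1 n_2+\tilde j_2$ with $0\le \tilde i_1,\tilde j_1<n_1$, $0\le \tilde i_2,\tilde j_2<n_2$ (Euclidean division), set $i_k=\tilde i_k+1$, $j_k=\tilde j_k+1$, and define the linear indices $l_1=(j_1-1)n_1+i_1$ and $l_2=(j_2-1)n_2+i_2$. Let $S\subset\mathbb{N}\times\mathbb{N}$ be the set of all pairs $(l_1,l_2)$ so obtained as $(i,j)$ ranges over the positions of the nonzero entries of $A$. Then $A=A_1\otimes A_2$ for some $A_1\in\{0,1\}^{n_1\times n_1}$, $A_2\in\{0,1\}^{n_2\times n_2}$ if and only if there exist subsets $S_1,S_2\subset\mathbb{N}$ such that $S=S_1\times S_2$.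
   Context: Kronecker products of binary matrices use Boolean arithmetic ($1+1=1$, products as usual). *)

theory Defs
  imports Main
begin

text \<open>Binary n x n matrices are represented as functions nat => nat => bool,
  with 1-based indices; only the entries with indices in 1..n are relevant.
  True stands for the entry 1.\<close>

definition kron :: "nat \<Rightarrow> (nat \<Rightarrow> nat \<Rightarrow> bool) \<Rightarrow> (nat \<Rightarrow> nat \<Rightarrow> bool) \<Rightarrow> nat \<Rightarrow> nat \<Rightarrow> bool" where
  "kron n2 A1 A2 i j =
     (A1 ((i - 1) div n2 + 1) ((j - 1) div n2 + 1) \<and> A2 ((i - 1) mod n2 + 1) ((j - 1) mod n2 + 1))"

definition lin_pair :: "nat \<Rightarrow> nat \<Rightarrow> nat \<Rightarrow> nat \<Rightarrow> nat \<times> nat" where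
  "lin_pair n1 n2 i j =
     (let i1 = (i - 1) div n2 + 1; i2 = (i - 1) mod n2 + 1;
          j1 = (j - 1) div n2 + 1; j2 = (j - 1) mod n2 + 1
      in ((j1 - 1) * n1 + i1, (j2 - 1) * n2 + i2))"

definition pair_set :: "nat \<Rightarrow> nat \<Rightarrow> nat \<Rightarrow> (nat \<Rightarrow> nat \<Rightarrow> bool) \<Rightarrow> (nat \<times> nat) set" where
  "pair_set n n1 n2 A =
     {lin_pair n1 n2 i j | i j. i \<in> {1..n} \<and> j \<in> {1..n} \<and> A i j}"

end

theory Submission
  imports Defs
begin

text \<open>Position (i,j) of a matrix of size n = n1 n2 is addressed by the pair of positions
  ((i1,j1),(i2,j2)) in the two Kronecker factors, and (l1,l2) is this pair with each factor
  position vectorised column-major; so (i,j) \<mapsto> (l1,l2) is a bijection from {1..n}\<times>{1..n}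
  onto {1..n1\<cdot>n1}\<times>{1..n2\<cdot>n2}. A is a Kronecker product exactly when its indicator is a conjunction of a
  predicate of l1 and a predicate of l2, and under a bijection onto a product set this says
  precisely that the image S of the support is a Cartesian product.\<close>

definition product_form_on :: "'a set \<Rightarrow> ('a \<Rightarrow> 'b \<times> 'c) \<Rightarrow> ('a \<Rightarrow> bool) \<Rightarrow> bool" where
  "product_form_on X f P \<longleftrightarrow> (\<exists>Q R. \<forall>x\<in>X. P x = (Q (fst (f x)) \<and> R (snd (f x))))"

lemma image_eq_Times_iff_product_form_on:
  assumes "bij_betw f X (Y \<times> Z)"
  shows "(\<exists>S T. f ` {x \<in> X. P x} = S \<times> T) \<longleftrightarrow> product_form_on X f P"
  unfolding product_form_on_def
proof
  assume "\<exists>S T. f ` {x \<in> X. P x} = S \<times> T"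
  then obtain S T where ST: "f ` {x \<in> X. P x} = S \<times> T" by blast
  have "P x = (f x \<in> S \<times> T)" if "x \<in> X" for x
    using that assms unfolding ST[symmetric] bij_betw_def inj_on_def by blast
  then show "\<exists>Q R. \<forall>x\<in>X. P x = (Q (fst (f x)) \<and> R (snd (f x)))"
    by (intro exI[of _ "\<lambda>y. y \<in> S"] exI[of _ "\<lambda>z. z \<in> T"]) (simp add: mem_Times_iff)
next
  assume "\<exists>Q R. \<forall>x\<in>X. P x = (Q (fst (f x)) \<and> R (snd (f x)))"
  then obtain Q R where QR: "\<forall>x\<in>X. P x = (Q (fst (f x)) \<and> R (snd (f x)))" by blast
  have "f ` {x \<in> X. P x} = {y \<in> f ` X. Q (fst y) \<and> R (snd y)}"
    using QR by auto
  also have "\<dots> = {y \<in> Y. Q y} \<times> {z \<in> Z. R z}"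
    using bij_betw_imp_surj_on[OF assms] by auto
  finally show "\<exists>S T. f ` {x \<in> X. P x} = S \<times> T" by blast
qed

lemma product_form_on_map_prod_comp:
  assumes "inj_on g Y" "inj_on h Z" "f ` X \<subseteq> Y \<times> Z"
  shows "product_form_on X (map_prod g h \<circ> f) P \<longleftrightarrow> product_form_on X f P"
  unfolding product_form_on_def
proof
  assume "\<exists>Q R. \<forall>x\<in>X. P x = (Q (fst ((map_prod g h \<circ> f) x)) \<and> R (snd ((map_prod g h \<circ> f) x)))"
  then obtain Q R
    where "\<forall>x\<in>X. P x = (Q (fst ((map_prod g h \<circ> f) x)) \<and> R (snd ((map_prod g h \<circ> f) x)))"
    by blast
  then have "\<forall>x\<in>X. P x = ((Q \<circ> g) (fst (f x)) \<and> (R \<circ> h) (snd (f x)))"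
    by (simp add: map_prod_def split_def)
  then show "\<exists>Q R. \<forall>x\<in>X. P x = (Q (fst (f x)) \<and> R (snd (f x)))"
    by blast
next
  assume "\<exists>Q R. \<forall>x\<in>X. P x = (Q (fst (f x)) \<and> R (snd (f x)))"
  then obtain Q R where QR: "\<forall>x\<in>X. P x = (Q (fst (f x)) \<and> R (snd (f x)))" by blast
  have "\<forall>x\<in>X. P x = ((Q \<circ> the_inv_into Y g) (fst ((map_prod g h \<circ> f) x))
                      \<and> (R \<circ> the_inv_into Z h) (snd ((map_prod g h \<circ> f) x)))"
    using QR assms by (auto simp: the_inv_into_f_f mem_Times_iff map_prod_def split_def)
  then show "\<exists>Q R. \<forall>x\<in>X. P x = (Q (fst ((map_prod g h \<circ> f) x)) \<and> R (snd ((map_prod g h \<circ> f) x)))"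
    by blast
qed

definition split_index :: "nat \<Rightarrow> nat \<Rightarrow> nat \<times> nat" where
  "split_index m i = ((i - 1) div m + 1, (i - 1) mod m + 1)"

definition vec_index :: "nat \<Rightarrow> nat \<times> nat \<Rightarrow> nat" where
  "vec_index m = (\<lambda>(i, j). (j - 1) * m + i)"

lemma split_vec_index:
  assumes "i \<in> {1..m}" "1 \<le> j"
  shows "split_index m (vec_index m (i, j)) = (j, i)"
proof -
  obtain i0 where i0: "i = Suc i0" "i0 < m"
    using assms by (cases i) auto
  then have "vec_index m (i, j) - 1 = i0 + (j - 1) * m"
    by (simp add: vec_index_def)
  then show ?thesis
    using i0 assms by (simp add: split_index_def)
qed

lemma vec_split_index:
  assumes "1 \<le> i"
  shows "vec_index m (prod.swap (split_index m i)) = i"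
  using assms div_mult_mod_eq[of "i - 1" m] by (simp add: split_index_def vec_index_def)

lemma split_index_mem:
  assumes "0 < m" "i \<in> {1..k * m}"
  shows "split_index m i \<in> {1..k} \<times> {1..m}"
proof -
  have "i - 1 < k * m" using assms by auto
  then have "(i - 1) div m < k" by (simp add: less_mult_imp_div_less)
  then show ?thesis using assms by (simp add: split_index_def Suc_leI)
qed

lemma vec_index_mem:
  assumes "i \<in> {1..m}" "j \<in> {1..k}"
  shows "vec_index m (i, j) \<in> {1..k * m}"
proof -
  have "(j - 1) * m + i \<le> (j - 1) * m + m" using assms by simp
  also have "\<dots> = j * m" using assms by (cases j) auto
  also have "\<dots> \<le> k * m" using assms by simp
  finally show ?thesis using assms by (simp add: vec_index_def)
qed

lemma bij_betw_split_index:
  assumes "0 < m"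
  shows "bij_betw (split_index m) {1..k * m} ({1..k} \<times> {1..m})"
proof (rule bij_betw_byWitness[where f' = "vec_index m \<circ> prod.swap"])
  show "split_index m ` {1..k * m} \<subseteq> {1..k} \<times> {1..m}"
    using split_index_mem[OF assms] by blast
  show "(vec_index m \<circ> prod.swap) ` ({1..k} \<times> {1..m}) \<subseteq> {1..k * m}"
    using vec_index_mem by auto
qed (auto simp: vec_split_index split_vec_index)

lemma bij_betw_vec_index:
  assumes "0 < m"
  shows "bij_betw (vec_index m) ({1..m} \<times> {1..m}) {1..m * m}"
proof (rule bij_betw_byWitness[where f' = "prod.swap \<circ> split_index m"])
  show "vec_index m ` ({1..m} \<times> {1..m}) \<subseteq> {1..m * m}"
    using vec_index_mem by auto
  show "(prod.swap \<circ> split_index m) ` {1..m * m} \<subseteq> {1..m} \<times> {1..m}"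
    using split_index_mem[OF assms] by force
qed (auto simp: vec_split_index split_vec_index)

definition pair_interchange :: "('a \<times> 'b) \<times> ('c \<times> 'd) \<Rightarrow> ('a \<times> 'c) \<times> ('b \<times> 'd)" where
  "pair_interchange = (\<lambda>((a, b), (c, d)). ((a, c), (b, d)))"

lemma bij_betw_pair_interchange:
  "bij_betw pair_interchange ((A \<times> B) \<times> (C \<times> D)) ((A \<times> C) \<times> (B \<times> D))"
  by (rule bij_betw_byWitness[where f' = pair_interchange]) (auto simp: pair_interchange_def)

definition factor_positions :: "nat \<Rightarrow> nat \<times> nat \<Rightarrow> (nat \<times> nat) \<times> (nat \<times> nat)" where
  "factor_positions m = pair_interchange \<circ> map_prod (split_index m) (split_index m)"

lemma bij_betw_factor_positions:
  assumes "0 < n2"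
  shows "bij_betw (factor_positions n2) ({1..n1 * n2} \<times> {1..n1 * n2})
           (({1..n1} \<times> {1..n1}) \<times> ({1..n2} \<times> {1..n2}))"
  unfolding factor_positions_def
  using bij_betw_map_prod[OF bij_betw_split_index bij_betw_split_index, OF assms assms]
  by (rule bij_betw_trans) (rule bij_betw_pair_interchange)

lemma kron_eq_factor_positions:
  "kron n2 A1 A2 i j =
     (case_prod A1 (fst (factor_positions n2 (i, j))) \<and> case_prod A2 (snd (factor_positions n2 (i, j))))"
  by (simp add: kron_def factor_positions_def pair_interchange_def split_index_def)

lemma case_prod_lin_pair_eq:
  "case_prod (lin_pair n1 n2) = map_prod (vec_index n1) (vec_index n2) \<circ> factor_positions n2"
  by (auto simp: lin_pair_def Let_def factor_positions_def pair_interchange_def split_index_def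
      vec_index_def)

lemma bij_betw_lin_pair:
  assumes "0 < n1" "0 < n2"
  shows "bij_betw (case_prod (lin_pair n1 n2)) ({1..n1 * n2} \<times> {1..n1 * n2})
           ({1..n1 * n1} \<times> {1..n2 * n2})"
  unfolding case_prod_lin_pair_eq
  using bij_betw_factor_positions[OF assms(2)]
  by (rule bij_betw_trans) (intro bij_betw_map_prod bij_betw_vec_index assms)

lemma pair_set_eq_image:
  "pair_set n n1 n2 A = case_prod (lin_pair n1 n2) ` {x \<in> {1..n} \<times> {1..n}. case_prod A x}"
  unfolding pair_set_def by (auto simp: image_iff; blast)

lemma ex_kron_iff_product_form_on:
  "(\<exists>A1 A2. \<forall>i\<in>I. \<forall>j\<in>I. A i j = kron n2 A1 A2 i j)
   \<longleftrightarrow> product_form_on (I \<times> I) (factor_positions n2) (case_prod A)"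
  unfolding product_form_on_def
proof
  assume "\<exists>A1 A2. \<forall>i\<in>I. \<forall>j\<in>I. A i j = kron n2 A1 A2 i j"
  then show "\<exists>Q R. \<forall>x\<in>I \<times> I. case_prod A x
                      = (Q (fst (factor_positions n2 x)) \<and> R (snd (factor_positions n2 x)))"
    by (auto simp: kron_eq_factor_positions)
next
  assume "\<exists>Q R. \<forall>x\<in>I \<times> I. case_prod A x
                      = (Q (fst (factor_positions n2 x)) \<and> R (snd (factor_positions n2 x)))"
  then obtain Q R where "\<forall>x\<in>I \<times> I. case_prod A x
                      = (Q (fst (factor_positions n2 x)) \<and> R (snd (factor_positions n2 x)))"
    by blast
  then have "\<forall>i\<in>I. \<forall>j\<in>I. A i j = kron n2 (curry Q) (curry R) i j"
    by (simp add: kron_eq_factor_positions)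
  then show "\<exists>A1 A2. \<forall>i\<in>I. \<forall>j\<in>I. A i j = kron n2 A1 A2 i j" by blast
qed

theorem lemma4:
  fixes A :: "nat \<Rightarrow> nat \<Rightarrow> bool" and n n1 n2 :: nat
  assumes "n1 > 0" and "n2 > 0" and "n1 * n2 = n"
  shows "(\<exists>A1 A2 :: nat \<Rightarrow> nat \<Rightarrow> bool.
            \<forall>i\<in>{1..n}. \<forall>j\<in>{1..n}. A i j = kron n2 A1 A2 i j)
         \<longleftrightarrow> (\<exists>S1 S2 :: nat set. pair_set n n1 n2 A = S1 \<times> S2)"
proof -
  let ?X = "{1..n} \<times> {1..n}"
  have factors: "factor_positions n2 ` ?X = ({1..n1} \<times> {1..n1}) \<times> ({1..n2} \<times> {1..n2})"
    using bij_betw_imp_surj_on[OF bij_betw_factor_positions[OF assms(2)]] assms(3) by blast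
  have vec_inj: "inj_on (vec_index n1) ({1..n1} \<times> {1..n1})" "inj_on (vec_index n2) ({1..n2} \<times> {1..n2})"
    using bij_betw_imp_inj_on[OF bij_betw_vec_index] assms(1,2) by blast+
  have "(\<exists>A1 A2. \<forall>i\<in>{1..n}. \<forall>j\<in>{1..n}. A i j = kron n2 A1 A2 i j)
      \<longleftrightarrow> product_form_on ?X (factor_positions n2) (case_prod A)"
    by (rule ex_kron_iff_product_form_on)
  also have "\<dots> \<longleftrightarrow> product_form_on ?X (case_prod (lin_pair n1 n2)) (case_prod A)"
    unfolding case_prod_lin_pair_eq
    using product_form_on_map_prod_comp[OF vec_inj equalityD1[OF factors]] by simp
  also have "\<dots> \<longleftrightarrow> (\<exists>S1 S2. pair_set n n1 n2 A = S1 \<times> S2)"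
    unfolding pair_set_eq_image
    using image_eq_Times_iff_product_form_on[OF bij_betw_lin_pair[OF assms(1,2)]] assms(3)
    by simp
  finally show ?thesis .
qed

end
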